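(* Let $\bar\alpha\in[0,1]$ and $n\ge1$. The minimum of $C(\boldsymbol{\alpha})$ over all $\boldsymbol{\alpha}\in[0,1]^n$ satisfying $G(\boldsymbol{\alpha})=0$ is attained at $\boldsymbol{\alpha}_*=(\bar\alpha,\bar\alpha,\dots,\bar\alpha)$, and the minimum value is $C(\boldsymbol{\alpha}_* )=n\,c(\bar\alpha)$; that is, $C(\boldsymbol{\alpha})\ge n\,c(\bar\alpha)$ for every $\boldsymbol{\alpha}\in[0,1]^n$ with $G(\boldsymbol{\alpha})=0$.
   Context: Model of a road with $n\ge1$ parallel lanes of common length $d>0$. Vehicles have length $L>0$. A vehicle keeps a headway (space gap) $\bar h$ to the vehicle in front of it if both it and the vehicle in front are autonomous, and headway $h$ otherwise, where $0\le \bar h<h$. Vehicle types within a lane are i.i.d. Bernoulli: each vehicle in lane $i$ is autonomous with probability $\alpha_i\in[0,1]$ (the lane's autonomy level). Set $k_1=(L+h)/d$ and $k_2=(h-\bar h)/d$, so $k_1>k_2>0$ and $k_1-k_2=(L+\bar h)/d>0$. The capacity of a lane with autonomy level $\alpha\in[0,1]$ is $$c(\alpha)=\frac{1}{k_1-k_2\alpha^2}=\frac{d}{L+h-(h-\bar h)\alpha^2}.$$ Let $\bar\alpha\in[0,1]$ be the overall fraction of autonomous vehicles on the road. For $\boldsymbol{\alpha}=(\alpha_1,\dots,\alpha_n)\in[0,1]^n$ define $C(\boldsymbol{\alpha})=\sum_{i=1}^n c(\alpha_i)$ (total capacity) and $G(\boldsymbol{\alpha})=\sum_{i=1}^n(\alpha_i-\bar\alpha)c(\alpha_i)$;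 the constraint $G(\boldsymbol{\alpha})=0$ expresses that the overall autonomy level equals $\bar\alpha$. *)

theory Defs
  imports Complex_Main
begin

definition cap :: "real \<Rightarrow> real \<Rightarrow> real \<Rightarrow> real \<Rightarrow> real \<Rightarrow> real" where
  "cap d L h hbar a = d / (L + h - (h - hbar) * a\<^sup>2)"

definition totcap :: "real \<Rightarrow> real \<Rightarrow> real \<Rightarrow> real \<Rightarrow> nat \<Rightarrow> (nat \<Rightarrow> real) \<Rightarrow> real" where
  "totcap d L h hbar n al = (\<Sum>i<n. cap d L h hbar (al i))"

definition Gcon :: "real \<Rightarrow> real \<Rightarrow> real \<Rightarrow> real \<Rightarrow> nat \<Rightarrow> real \<Rightarrow> (nat \<Rightarrow> real) \<Rightarrow> real" where
  "Gcon d L h hbar n abar al = (\<Sum>i<n. (al i - abar) * cap d L h hbar (al i))"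

end

theory Submission
  imports Defs
begin

text \<open>The uniform profile is a Lagrange point: with the multiplier
  \<open>\<mu> = c'(b) / c(b) = 2 (h - hbar) b / (L + h - (h - hbar) b\<^sup>2)\<close>, every lane satisfies
  \<open>c(a) - \<mu> (a - b) c(a) \<ge> c(b)\<close>, because after clearing denominators the difference is
  \<open>d (h - hbar) (a - b)\<^sup>2\<close> over a positive product. Summing over the lanes with \<open>b = abar\<close>
  gives \<open>C(\<alpha>) - \<mu> G(\<alpha>) \<ge> n c(abar)\<close>, and the constraint \<open>G(\<alpha>) = 0\<close> removes the
  multiplier term.\<close>

lemma cap_denominator_pos:
  fixes L h hbar a :: real
  assumes "L + hbar > 0" "hbar \<le> h" "0 \<le> a" "a \<le> 1"
  shows "L + h - (h - hbar) * a\<^sup>2 > 0"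
proof -
  have "(h - hbar) * a\<^sup>2 \<le> h - hbar"
    using assms mult_left_mono[of "a\<^sup>2" 1 "h - hbar"] by (simp add: power_le_one)
  then show ?thesis using assms by linarith
qed

lemma cap_lagrangian_ge:
  fixes d L h hbar a b :: real
  defines "Da \<equiv> L + h - (h - hbar) * a\<^sup>2" and "Db \<equiv> L + h - (h - hbar) * b\<^sup>2"
  assumes "0 \<le> d" "hbar \<le> h" "Da > 0" "Db > 0"
  shows "cap d L h hbar b \<le> cap d L h hbar a - 2 * (h - hbar) * b / Db * ((a - b) * cap d L h hbar a)"
proof -
  have "cap d L h hbar a - 2 * (h - hbar) * b / Db * ((a - b) * cap d L h hbar a) - cap d L h hbar b
      = d * (Db - 2 * (h - hbar) * b * (a - b) - Da) / (Da * Db)"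
    using assms(5,6) unfolding cap_def Da_def[symmetric] Db_def[symmetric] by (simp add: field_simps)
  also have "Db - 2 * (h - hbar) * b * (a - b) - Da = (h - hbar) * (a - b)\<^sup>2"
    by (simp add: Da_def Db_def power2_eq_square algebra_simps)
  also have "d * ((h - hbar) * (a - b)\<^sup>2) / (Da * Db) \<ge> 0"
    using assms by simp
  finally show ?thesis by simp
qed

lemma totcap_lagrangian_ge:
  fixes d L h hbar b :: real and al :: "nat \<Rightarrow> real"
  defines "\<mu> \<equiv> 2 * (h - hbar) * b / (L + h - (h - hbar) * b\<^sup>2)"
  assumes "0 \<le> d" "L + hbar > 0" "hbar \<le> h" "0 \<le> b" "b \<le> 1" "\<forall>i<n. 0 \<le> al i \<and> al i \<le> 1"
  shows "real n * cap d L h hbar b \<le> totcap d L h hbar n al - \<mu> * Gcon d L h hbar n b al"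
proof -
  have "real n * cap d L h hbar b = (\<Sum>i<n. cap d L h hbar b)" by simp
  also have "\<dots> \<le> (\<Sum>i<n. cap d L h hbar (al i) - \<mu> * ((al i - b) * cap d L h hbar (al i)))"
  proof (rule sum_mono)
    fix i assume "i \<in> {..<n}"
    then show "cap d L h hbar b \<le> cap d L h hbar (al i) - \<mu> * ((al i - b) * cap d L h hbar (al i))"
      unfolding \<mu>_def using assms by (intro cap_lagrangian_ge cap_denominator_pos) auto
  qed
  also have "\<dots> = totcap d L h hbar n al - \<mu> * Gcon d L h hbar n b al"
    by (simp add: totcap_def Gcon_def sum_subtractf sum_distrib_left)
  finally show ?thesis .
qed

theorem proposition1:
  fixes d L h hbar abar :: real and n :: nat
  assumes "d > 0" and "L > 0" and "0 \<le> hbar" and "hbar < h"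
    and "0 \<le> abar" and "abar \<le> 1" and "n \<ge> 1"
  shows "Gcon d L h hbar n abar (\<lambda>_. abar) = 0
    \<and> totcap d L h hbar n (\<lambda>_. abar) = real n * cap d L h hbar abar
    \<and> (\<forall>al :: nat \<Rightarrow> real. (\<forall>i<n. 0 \<le> al i \<and> al i \<le> 1)
          \<longrightarrow> Gcon d L h hbar n abar al = 0
          \<longrightarrow> totcap d L h hbar n al \<ge> real n * cap d L h hbar abar)"
proof (intro conjI allI impI)
  show "Gcon d L h hbar n abar (\<lambda>_. abar) = 0" by (simp add: Gcon_def)
  show "totcap d L h hbar n (\<lambda>_. abar) = real n * cap d L h hbar abar" by (simp add: totcap_def)
  fix al :: "nat \<Rightarrow> real"
  assume "\<forall>i<n. 0 \<le> al i \<and> al i \<le> 1" and "Gcon d L h hbar n abar al = 0"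
  then show "totcap d L h hbar n al \<ge> real n * cap d L h hbar abar"
    using totcap_lagrangian_ge[of d L hbar h abar n al] assms by simp
qed

end
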